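(* Consider an ROS system with $n$ bidders and $k$ items in the smooth limit, but where each item is sold by a first-price auction (the winner pays its own bid). Then, regardless of the number of bidders, items and of the valuation distribution, every solution of $\frac{dm_i}{dt}=U_i(m)$, $i=1,\dots,n$, with initial condition $m(0)\in(0,\infty)^n$ converges to the vector of multipliers $(1,1,\dots,1)$.
   Context: Bidder $i$ uses a multiplier $m_i$ and bids $b_{ij}=m_iv_{ij}$ on item $j$. In the first-price auction the highest bid wins (ties split uniformly at random), $x_{ij}\in[0,1]$ is the winning probability and the payment is $p_{ij}=x_{ij}b_{ij}$. Smooth limit: the valuation vector $v=(v_{ij})$ is random with a positive $C^1$ density on a box $[0,M]^{nk}$, and $U_i(m)=\mathbb E[\sum_j v_{ij}x_{ij}(m)-p_{ij}(m)]$. *)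

theory Defs
  imports "HOL-Analysis.Analysis"
begin

text \<open>Bidders are indexed by a finite type 'n, items by a finite type 'k.
  A valuation profile is v :: real^'k^'n, with v$i$j the value of bidder i for item j.
  A multiplier profile is m :: real^'n.\<close>

definition bid :: "real^'n \<Rightarrow> real^'k^'n \<Rightarrow> 'n::finite \<Rightarrow> 'k::finite \<Rightarrow> real" where
  "bid m v i j = m$i * v$i$j"

definition win_prob :: "real^'n \<Rightarrow> real^'k^'n \<Rightarrow> 'n::finite \<Rightarrow> 'k::finite \<Rightarrow> real" where
  "win_prob m v i j =
     (let W = {l. \<forall>l'. bid m v l' j \<le> bid m v l j}
      in if i \<in> W then 1 / real (card W) else 0)"

definition fp_payment :: "real^'n \<Rightarrow> real^'k^'n \<Rightarrow> 'n::finite \<Rightarrow> 'k::finite \<Rightarrow> real" where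
  "fp_payment m v i j = win_prob m v i j * bid m v i j"

definition val_box :: "real \<Rightarrow> (real^'k::finite^'n::finite) set" where
  "val_box M = cbox 0 (\<chi> i j. M)"

definition smooth_density :: "real \<Rightarrow> (real^'k::finite^'n::finite \<Rightarrow> real) \<Rightarrow> bool" where
  "smooth_density M f \<longleftrightarrow>
     0 < M \<and>
     (\<forall>v \<in> val_box M. 0 < f v) \<and>
     (\<forall>v. v \<notin> val_box M \<longrightarrow> f v = 0) \<and>
     (f has_integral 1) (val_box M) \<and>
     (\<exists>f'. (\<forall>v \<in> val_box M. (f has_derivative blinfun_apply (f' v)) (at v within val_box M))
           \<and> continuous_on (val_box M) f')"

definition fp_utility :: "real \<Rightarrow> (real^'k::finite^'n::finite \<Rightarrow> real) \<Rightarrow> real^'n \<Rightarrow> 'n \<Rightarrow> real" where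
  "fp_utility M f m i =
     integral (val_box M)
       (\<lambda>v. f v * (\<Sum>j\<in>UNIV. v$i$j * win_prob m v i j - fp_payment m v i j))"

end

theory Submission
  imports Defs "HOL-Real_Asymp.Real_Asymp"
begin

text \<open>In a first-price auction bidder i pays m_i v_ij for every item j she wins, so
  U_i(m) = (1 - m_i) G_i(m), where G_i(m) \<ge> 0 is the expected value she wins. Along the flow
  each m_i therefore relaxes monotonically towards 1 without crossing it, and the trajectory stays
  in a box [lo, hi]^n with lo > 0. On that box G_i is bounded below by some c > 0: on a set of
  valuations of positive measure bidder i values some item at least M/2 while all others value it
  so little that even with multiplier hi they are outbid. Hence |m_i(t) - 1| decays like exp(-ct).\<close>

lemma mem_cbox_vec:
  "(v::'a::euclidean_space^'n::finite) \<in> cbox a b \<longleftrightarrow> (\<forall>l. v$l \<in> cbox (a$l) (b$l))"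
proof -
  have "v \<in> cbox a b \<longleftrightarrow> (\<forall>l. \<forall>u\<in>Basis. a$l \<bullet> u \<le> v$l \<bullet> u \<and> v$l \<bullet> u \<le> b$l \<bullet> u)"
    unfolding mem_box Basis_vec_def by (simp add: inner_axis)
  then show ?thesis by (simp add: mem_box)
qed

lemma mem_cbox_vec_vec:
  "(v::real^'k::finite^'n::finite) \<in> cbox a b \<longleftrightarrow> (\<forall>l j. a$l$j \<le> v$l$j \<and> v$l$j \<le> b$l$j)"
  unfolding mem_cbox_vec mem_box_cart by simp

lemma content_cbox_vec_vec_pos:
  assumes "\<And>l j. a$l$j < (b::real^'k::finite^'n::finite)$l$j"
  shows "0 < measure lborel (cbox a b)"
proof -
  have "a \<bullet> u < b \<bullet> u" if "u \<in> Basis" for u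
  proof -
    obtain l j where "u = axis l (axis j 1)"
      using \<open>u \<in> Basis\<close> unfolding Basis_vec_def by auto
    then show ?thesis by (simp add: inner_axis assms)
  qed
  then show ?thesis by (simp add: content_pos_lt_eq)
qed

lemma mem_val_box: "v \<in> val_box M \<longleftrightarrow> (\<forall>l j. 0 \<le> v$l$j \<and> v$l$j \<le> M)"
  unfolding val_box_def mem_cbox_vec_vec by simp

lemma content_mult_le_integral:
  fixes g :: "'a::euclidean_space \<Rightarrow> real"
  assumes sub: "cbox a b \<subseteq> S" and int: "g integrable_on S"
    and nonneg: "\<And>x. x \<in> S \<Longrightarrow> 0 \<le> g x"
    and lower: "\<And>x. x \<in> cbox a b \<Longrightarrow> \<kappa> \<le> g x"
  shows "measure lborel (cbox a b) * \<kappa> \<le> integral S g"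
proof -
  have int_ab: "g integrable_on cbox a b" using integrable_on_subcbox[OF int sub] .
  have "measure lborel (cbox a b) * \<kappa> = integral (cbox a b) (\<lambda>x. \<kappa>)" by simp
  also have "\<dots> \<le> integral (cbox a b) g"
    using int_ab lower by (intro integral_le) auto
  also have "\<dots> \<le> integral S g"
    using sub int_ab int nonneg by (intro integral_subset_le) auto
  finally show ?thesis .
qed

definition winners :: "real^'n \<Rightarrow> real^'k^'n \<Rightarrow> 'k \<Rightarrow> 'n::finite set" where
  "winners m v j = {l. \<forall>l'. bid m v l' j \<le> bid m v l j}"

lemma win_prob_winners:
  "win_prob m v i j = (if i \<in> winners m v j then 1 / real (card (winners m v j)) else 0)"
  unfolding win_prob_def winners_def Let_def ..

lemma win_prob_nonneg: "0 \<le> win_prob m v i j"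
  unfolding win_prob_winners by simp

lemma win_prob_le_one: "win_prob m v i j \<le> 1"
proof -
  have "i \<in> winners m v j \<Longrightarrow> 1 \<le> real (card (winners m v j))"
    using card_gt_0_iff[of "winners m v j"] by fastforce
  then show ?thesis unfolding win_prob_winners by auto
qed

lemma win_prob_eq_one_if_outbids:
  assumes "\<And>l. l \<noteq> i \<Longrightarrow> bid m v l j < bid m v i j"
  shows "win_prob m v i j = 1"
proof -
  have "winners m v j = {i}"
    unfolding winners_def using assms by (force simp: less_le_not_le)
  then show ?thesis unfolding win_prob_winners by simp
qed

lemma winners_eq_borel: "{v::real^'k::finite^'n::finite. winners m v j = S} \<in> sets borel"
proof -
  define C where "C l = {v::real^'k^'n. \<forall>l'. bid m v l' j \<le> bid m v l j}" for l
  have "closed (C l)" for l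
    unfolding C_def bid_def by (intro closed_Collect_all closed_Collect_le continuous_intros)
  then have "(\<Inter>l. if l \<in> S then C l else - C l) \<in> sets borel"
    by (intro sets.finite_INT) auto
  moreover have "{v. winners m v j = S} = (\<Inter>l. if l \<in> S then C l else - C l)"
  proof (rule set_eqI)
    fix v
    have "winners m v j = S \<longleftrightarrow> (\<forall>l. l \<in> S \<longleftrightarrow> v \<in> C l)"
      unfolding winners_def C_def by auto
    then show "v \<in> {v. winners m v j = S} \<longleftrightarrow> v \<in> (\<Inter>l. if l \<in> S then C l else - C l)"
      by (auto split: if_splits)
  qed
  ultimately show ?thesis by simp
qed

lemma win_prob_borel_measurable: "(\<lambda>v. win_prob m v i j) \<in> borel_measurable borel"
proof -
  have "win_prob m v i j =
      (\<Sum>S\<in>UNIV. if winners m v j = S then (if i \<in> S then 1 / real (card S) else 0) else 0)" for v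
    unfolding win_prob_winners by (simp add: sum.delta)
  moreover have "(\<lambda>v. \<Sum>S\<in>UNIV.
      if winners m v j = S then (if i \<in> S then 1 / real (card S) else 0) else 0) \<in> borel_measurable borel"
    using winners_eq_borel[of m j] by (intro borel_measurable_sum measurable_If) auto
  ultimately show ?thesis by simp
qed

definition value_won :: "real^'n \<Rightarrow> real^'k^'n \<Rightarrow> 'n::finite \<Rightarrow> real" where
  "value_won m v i = (\<Sum>j\<in>UNIV. v$i$(j::'k::finite) * win_prob m v i j)"

definition expected_value_won ::
    "real \<Rightarrow> (real^'k::finite^'n::finite \<Rightarrow> real) \<Rightarrow> real^'n \<Rightarrow> 'n \<Rightarrow> real" where
  "expected_value_won M f m i = integral (val_box M) (\<lambda>v. f v * value_won m v i)"

lemma fp_utility_eq: "fp_utility M f m i = (1 - m$i) * expected_value_won M f m i"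
proof -
  have "(\<lambda>v. f v * (\<Sum>j\<in>UNIV. v$i$j * win_prob m v i j - fp_payment m v i j))
      = (\<lambda>v. (1 - m$i) * (f v * value_won m v i))"
    unfolding fp_payment_def bid_def value_won_def
    by (auto simp: sum_distrib_left algebra_simps sum_subtractf)
  then show ?thesis unfolding fp_utility_def expected_value_won_def by simp
qed

lemma value_won_nonneg: "v \<in> val_box M \<Longrightarrow> 0 \<le> value_won m v i"
  unfolding value_won_def mem_val_box by (intro sum_nonneg mult_nonneg_nonneg win_prob_nonneg) auto

lemma value_won_le:
  fixes v :: "real^'k::finite^'n::finite"
  assumes "v \<in> val_box M"
  shows "value_won m v i \<le> real CARD('k) * M"
proof -
  have "value_won m v i \<le> (\<Sum>j\<in>(UNIV::'k set). M)"
    unfolding value_won_def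
  proof (rule sum_mono)
    fix j :: 'k
    have "0 \<le> v$i$j" "v$i$j \<le> M" using assms by (auto simp: mem_val_box)
    then show "v$i$j * win_prob m v i j \<le> M"
      using mult_mono[of "v$i$j" M "win_prob m v i j" 1] win_prob_nonneg[of m v i j]
        win_prob_le_one[of m v i j] by simp
  qed
  then show ?thesis by simp
qed

lemma value_won_ge_if_outbids:
  assumes "v \<in> val_box M" and "\<And>l. l \<noteq> i \<Longrightarrow> bid m v l j < bid m v i j"
  shows "v$i$j \<le> value_won m v i"
proof -
  have "v$i$j * win_prob m v i j \<le> value_won m v i"
    unfolding value_won_def using assms(1)
    by (intro member_le_sum mult_nonneg_nonneg win_prob_nonneg) (auto simp: mem_val_box)
  then show ?thesis using win_prob_eq_one_if_outbids[OF assms(2)] by simp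
qed

lemma value_won_borel_measurable:
  "(\<lambda>v. value_won m v i) \<in> borel_measurable (borel :: (real^'k::finite^'n::finite) measure)"
proof -
  have "(\<lambda>v::real^'k^'n. v$i$j) \<in> borel_measurable borel" for j
    by (intro borel_measurable_continuous_onI continuous_intros)
  then show ?thesis
    unfolding value_won_def by (intro borel_measurable_sum borel_measurable_times win_prob_borel_measurable)
qed

lemma density_value_won_integrable:
  fixes f :: "real^'k::finite^'n::finite \<Rightarrow> real"
  assumes fc: "continuous_on (val_box M) f"
  shows "(\<lambda>v. f v * value_won m v i) integrable_on val_box M"
proof -
  have S: "val_box M \<in> sets lebesgue" unfolding val_box_def by simp
  obtain B where B: "\<And>v. v \<in> val_box M \<Longrightarrow> norm (f v) \<le> B"
    using compact_imp_bounded[OF compact_continuous_image[OF fc]] unfolding bounded_iff val_box_def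
    by fastforce
  show ?thesis
  proof (rule measurable_bounded_by_integrable_imp_integrable[OF _ _ _ S])
    show "(\<lambda>v. f v * value_won m v i) \<in> borel_measurable (lebesgue_on (val_box M))"
    proof (intro borel_measurable_times)
      show "f \<in> borel_measurable (lebesgue_on (val_box M))"
        using continuous_imp_measurable_on_sets_lebesgue[OF fc S] .
      show "(\<lambda>v. value_won m v i) \<in> borel_measurable (lebesgue_on (val_box M))"
        by (rule measurable_restrict_space1,
            rule borel_measurable_subalgebra[OF _ _ value_won_borel_measurable]) auto
    qed
    show "(\<lambda>v. B * (real CARD('k) * M)) integrable_on val_box M"
      unfolding val_box_def by (rule integrable_const)
    fix v :: "real^'k^'n" assume v: "v \<in> val_box M"
    then show "norm (f v * value_won m v i) \<le> B * (real CARD('k) * M)"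
      unfolding norm_mult using B[OF v] value_won_nonneg[OF v] value_won_le[OF v]
      by (intro mult_mono) auto
  qed
qed

lemma expected_value_won_nonneg:
  fixes f :: "real^'k::finite^'n::finite \<Rightarrow> real"
  assumes "continuous_on (val_box M) f" and "\<And>v. v \<in> val_box M \<Longrightarrow> 0 \<le> f v"
  shows "0 \<le> expected_value_won M f m i"
  unfolding expected_value_won_def
  using assms value_won_nonneg
  by (intro integral_nonneg density_value_won_integrable mult_nonneg_nonneg) auto

definition dominance_box :: "real \<Rightarrow> real \<Rightarrow> 'n \<Rightarrow> 'k \<Rightarrow> (real^'k::finite^'n::finite) set" where
  "dominance_box M \<epsilon> i j =
     cbox (\<chi> l j'. if l = i \<and> j' = j then M/2 else 0) (\<chi> l j'. if l \<noteq> i \<and> j' = j then \<epsilon> else M)"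

lemma mem_dominance_box:
  assumes "0 \<le> M" "\<epsilon> \<le> M"
  shows "v \<in> dominance_box M \<epsilon> i j \<longleftrightarrow>
    v \<in> val_box M \<and> M/2 \<le> v$i$j \<and> (\<forall>l. l \<noteq> i \<longrightarrow> v$l$j \<le> \<epsilon>)"
proof -
  have "(if l = i \<and> j' = j then M/2 else 0) \<le> v$l$j' \<and> v$l$j' \<le> (if l \<noteq> i \<and> j' = j then \<epsilon> else M)
      \<longleftrightarrow> 0 \<le> v$l$j' \<and> v$l$j' \<le> M \<and> (l = i \<and> j' = j \<longrightarrow> M/2 \<le> v$l$j')
        \<and> (l \<noteq> i \<and> j' = j \<longrightarrow> v$l$j' \<le> \<epsilon>)" for l j'
    using assms by auto
  then show ?thesis
    unfolding dominance_box_def mem_cbox_vec_vec mem_val_box by auto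
qed

lemma dominance_box_measure_pos:
  assumes "0 < M" "0 < \<epsilon>"
  shows "0 < measure lborel (dominance_box M \<epsilon> i j)"
  unfolding dominance_box_def using assms by (intro content_cbox_vec_vec_pos) auto

lemma outbids_on_dominance_box:
  assumes "v \<in> dominance_box M \<epsilon> i j" "0 \<le> M" "\<epsilon> \<le> M"
    and m: "\<forall>l. lo \<le> m$l \<and> m$l \<le> hi" and "0 \<le> lo" and "hi * \<epsilon> < lo * (M/2)" and "l \<noteq> i"
  shows "bid m v l j < bid m v i j"
proof -
  have v: "v \<in> val_box M" "M/2 \<le> v$i$j" "v$l$j \<le> \<epsilon>"
    using assms(1) \<open>l \<noteq> i\<close> by (auto simp: mem_dominance_box assms(2,3))
  have "bid m v l j \<le> hi * \<epsilon>"
    unfolding bid_def using m v assms(5) by (intro mult_mono) (auto simp: mem_val_box)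
  also have "\<dots> < lo * (M/2)" by fact
  also have "\<dots> \<le> bid m v i j"
    unfolding bid_def using m[rule_format, of i] v assms(2,5) by (intro mult_mono) auto
  finally show ?thesis .
qed

lemma expected_value_won_uniformly_pos:
  fixes f :: "real^'k::finite^'n::finite \<Rightarrow> real"
  assumes M: "0 < M" and fpos: "\<And>v. v \<in> val_box M \<Longrightarrow> 0 < f v"
    and fc: "continuous_on (val_box M) f" and lo: "0 < lo" "lo \<le> hi"
  shows "\<exists>c>0. \<forall>m. (\<forall>l. lo \<le> m$l \<and> m$l \<le> hi) \<longrightarrow> c \<le> expected_value_won M f m i"
proof -
  obtain j :: 'k where "j \<in> UNIV" by blast
  define \<epsilon> where "\<epsilon> = lo * M / (4 * hi)"
  have \<epsilon>: "0 < \<epsilon>" "\<epsilon> \<le> M" "hi * \<epsilon> < lo * (M/2)"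
    unfolding \<epsilon>_def using lo M by (auto simp: field_simps mult_right_mono)
  define D where "D = dominance_box M \<epsilon> i j"
  have D_sub: "D \<subseteq> val_box M" unfolding D_def using M \<epsilon> by (auto simp: mem_dominance_box)
  have D_pos: "0 < measure lborel D" unfolding D_def by (rule dominance_box_measure_pos[OF M \<epsilon>(1)])
  obtain a b where D_box: "D = cbox a b" unfolding D_def dominance_box_def by blast
  have "compact D" "D \<noteq> {}" using D_box D_pos by auto
  then obtain v0 where v0: "v0 \<in> D" "\<And>v. v \<in> D \<Longrightarrow> f v0 \<le> f v"
    using continuous_attains_inf[OF _ _ continuous_on_subset[OF fc D_sub]] by blast
  define \<kappa> where "\<kappa> = f v0 * (M/2)"
  have "measure lborel D * \<kappa> \<le> expected_value_won M f m i"
    if m: "\<forall>l. lo \<le> m$l \<and> m$l \<le> hi" for m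
    unfolding expected_value_won_def D_box
  proof (rule content_mult_le_integral)
    show "cbox a b \<subseteq> val_box M" using D_sub D_box by simp
    show "(\<lambda>v. f v * value_won m v i) integrable_on val_box M"
      using fc by (rule density_value_won_integrable)
    show "0 \<le> f v * value_won m v i" if "v \<in> val_box M" for v
      using that fpos[of v] value_won_nonneg[of v M m i] by simp
    fix v assume "v \<in> cbox a b"
    then have v: "v \<in> D" using D_box by simp
    then have vM: "v \<in> val_box M" and "M/2 \<le> v$i$j"
      using M \<epsilon> by (auto simp: D_def mem_dominance_box)
    moreover have "bid m v l j < bid m v i j" if "l \<noteq> i" for l
      using v M \<epsilon> m lo that unfolding D_def by (intro outbids_on_dominance_box) auto
    then have "v$i$j \<le> value_won m v i" by (rule value_won_ge_if_outbids[OF vM])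
    ultimately have "M/2 \<le> value_won m v i" by simp
    moreover have "f v0 \<le> f v" using v0(2)[OF v] .
    moreover have "0 \<le> f v" using fpos[OF vM] by simp
    ultimately show "\<kappa> \<le> f v * value_won m v i"
      unfolding \<kappa>_def using M by (intro mult_mono) auto
  qed
  moreover have "0 < \<kappa>" unfolding \<kappa>_def using fpos v0(1) D_sub M by auto
  ultimately show ?thesis using D_pos by (intro exI[of _ "measure lborel D * \<kappa>"]) auto
qed

lemma smooth_density_continuous: "smooth_density M f \<Longrightarrow> continuous_on (val_box M) f"
  unfolding smooth_density_def continuous_on_eq_continuous_within
  using has_derivative_continuous by blast

lemma nonincreasing_if_derivative_nonpos:
  fixes g :: "real \<Rightarrow> real"
  assumes g': "\<And>t. t \<ge> 0 \<Longrightarrow> (g has_real_derivative g' t) (at t within {0..})"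
    and nonpos: "\<And>t. t \<ge> 0 \<Longrightarrow> g' t \<le> 0"
    and "0 \<le> s" "s \<le> t"
  shows "g t \<le> g s"
proof -
  have "\<exists>x\<in>{s..t}. g t - g s = (\<lambda>h. g' x * h) (t - s)"
  proof (rule mvt_very_simple[OF \<open>s \<le> t\<close>])
    fix x assume "s \<le> x" "x \<le> t"
    then have "(g has_real_derivative g' x) (at x within {s..t})"
      using \<open>0 \<le> s\<close> by (intro has_field_derivative_subset[OF g']) auto
    then show "(g has_derivative (\<lambda>h. g' x * h)) (at x within {s..t})"
      by (simp add: has_field_derivative_def)
  qed
  then obtain x where "x \<in> {s..t}" "g t - g s = g' x * (t - s)" by blast
  moreover have "g' x * (t - s) \<le> 0"
    using nonpos[of x] \<open>x \<in> {s..t}\<close> \<open>0 \<le> s\<close> by (intro mult_nonpos_nonneg) auto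
  ultimately show ?thesis by simp
qed

lemma relaxation_dist_nonincreasing:
  fixes x g :: "real \<Rightarrow> real"
  assumes x': "\<And>t. t \<ge> 0 \<Longrightarrow> (x has_real_derivative (1 - x t) * g t) (at t within {0..})"
    and g: "\<And>t. t \<ge> 0 \<Longrightarrow> 0 \<le> g t" and "0 \<le> s" "s \<le> t"
  shows "\<bar>x t - 1\<bar> \<le> \<bar>x s - 1\<bar>"
proof -
  have "(x t - 1)^2 \<le> (x s - 1)^2"
  proof (rule nonincreasing_if_derivative_nonpos[OF _ _ \<open>0 \<le> s\<close> \<open>s \<le> t\<close>])
    fix r :: real assume "0 \<le> r"
    show "((\<lambda>r. (x r - 1)^2) has_real_derivative - 2 * (x r - 1)^2 * g r) (at r within {0..})"
      using x'[OF \<open>0 \<le> r\<close>] by (auto intro!: derivative_eq_intros simp: power2_eq_square algebra_simps)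
    show "- 2 * (x r - 1)^2 * g r \<le> 0" using g[OF \<open>0 \<le> r\<close>] by simp
  qed
  then show ?thesis by (simp add: abs_le_square_iff)
qed

lemma relaxation_no_crossing:
  fixes x g :: "real \<Rightarrow> real"
  assumes x': "\<And>t. t \<ge> 0 \<Longrightarrow> (x has_real_derivative (1 - x t) * g t) (at t within {0..})"
    and g: "\<And>t. t \<ge> 0 \<Longrightarrow> 0 \<le> g t" and "0 \<le> t"
  shows "0 \<le> (x t - 1) * (x 0 - 1)"
proof (rule ccontr)
  assume crossing: "\<not> 0 \<le> (x t - 1) * (x 0 - 1)"
  have "continuous_on {0..t} x"
    unfolding continuous_on_eq_continuous_within
  proof
    fix s assume "s \<in> {0..t}"
    then have "continuous (at s within {0..}) x"
      using x' by (auto intro: DERIV_continuous)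
    then show "continuous (at s within {0..t}) x"
      by (rule continuous_within_subset) auto
  qed
  moreover have "x 0 \<le> 1 \<and> 1 \<le> x t \<or> x t \<le> 1 \<and> 1 \<le> x 0"
    using crossing mult_nonneg_nonneg[of "x t - 1" "x 0 - 1"]
      mult_nonpos_nonpos[of "x t - 1" "x 0 - 1"] by linarith
  ultimately obtain s where "0 \<le> s" "s \<le> t" "x s = 1"
    using IVT'[of x 0 1 t] IVT2'[of x t 1 0] \<open>0 \<le> t\<close> by blast
  then have "\<bar>x t - 1\<bar> \<le> 0" using relaxation_dist_nonincreasing[OF x' g, of s t] by simp
  then show False using crossing by simp
qed

lemma relaxation_between:
  fixes x g :: "real \<Rightarrow> real"
  assumes x': "\<And>t. t \<ge> 0 \<Longrightarrow> (x has_real_derivative (1 - x t) * g t) (at t within {0..})"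
    and g: "\<And>t. t \<ge> 0 \<Longrightarrow> 0 \<le> g t" and "0 \<le> t"
  shows "min (x 0) 1 \<le> x t \<and> x t \<le> max (x 0) 1"
  using relaxation_dist_nonincreasing[OF x' g, of 0 t] relaxation_no_crossing[OF x' g \<open>0 \<le> t\<close>]
    \<open>0 \<le> t\<close> by (auto simp: zero_le_mult_iff abs_le_iff)

lemma relaxation_exponential_decay:
  fixes x g :: "real \<Rightarrow> real"
  assumes x': "\<And>t. t \<ge> 0 \<Longrightarrow> (x has_real_derivative (1 - x t) * g t) (at t within {0..})"
    and g: "\<And>t. t \<ge> 0 \<Longrightarrow> c \<le> g t" and "0 \<le> t"
  shows "\<bar>x t - 1\<bar> \<le> \<bar>x 0 - 1\<bar> * exp (- (c * t))"
proof -
  have "exp (2*c*t) * (x t - 1)^2 \<le> exp (2*c*0) * (x 0 - 1)^2"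
  proof (rule nonincreasing_if_derivative_nonpos[OF _ _ order_refl \<open>0 \<le> t\<close>])
    fix r :: real assume "0 \<le> r"
    show "((\<lambda>r. exp (2*c*r) * (x r - 1)^2) has_real_derivative
        2 * exp (2*c*r) * (x r - 1)^2 * (c - g r)) (at r within {0..})"
      using x'[OF \<open>0 \<le> r\<close>]
      by (auto intro!: derivative_eq_intros simp: power2_eq_square algebra_simps)
    show "2 * exp (2*c*r) * (x r - 1)^2 * (c - g r) \<le> 0"
      using g[OF \<open>0 \<le> r\<close>] by (intro mult_nonneg_nonpos) auto
  qed
  also have "exp (2*c*t) * (x t - 1)^2 = (exp (c*t) * \<bar>x t - 1\<bar>)^2"
    by (simp add: power_mult_distrib flip: exp_of_nat_mult)
  finally have "exp (c*t) * \<bar>x t - 1\<bar> \<le> \<bar>x 0 - 1\<bar>"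
    using abs_le_square_iff[of "exp (c*t) * \<bar>x t - 1\<bar>" "x 0 - 1"] by simp
  then show ?thesis by (simp add: exp_minus field_simps)
qed

lemma relaxation_tendsto_one:
  fixes x g :: "real \<Rightarrow> real"
  assumes x': "\<And>t. t \<ge> 0 \<Longrightarrow> (x has_real_derivative (1 - x t) * g t) (at t within {0..})"
    and g: "\<And>t. t \<ge> 0 \<Longrightarrow> c \<le> g t" and "0 < c"
  shows "(x \<longlongrightarrow> 1) at_top"
proof -
  have "((\<lambda>t. \<bar>x 0 - 1\<bar> * exp (- (c * t))) \<longlongrightarrow> 0) at_top"
    using \<open>0 < c\<close> by real_asymp
  moreover have "\<forall>\<^sub>F t in at_top. norm (x t - 1) \<le> \<bar>x 0 - 1\<bar> * exp (- (c * t))"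
    using eventually_ge_at_top[of 0]
    by eventually_elim (use relaxation_exponential_decay[OF x' g] in auto)
  ultimately have "((\<lambda>t. x t - 1) \<longlongrightarrow> 0) at_top"
    by (rule Lim_null_comparison[rotated])
  then show ?thesis by (rule LIM_zero_cancel)
qed

lemma relaxation_system_in_box:
  fixes x :: "real \<Rightarrow> real^'n::finite" and g :: "'n \<Rightarrow> real \<Rightarrow> real"
  assumes x': "\<And>i t. t \<ge> 0 \<Longrightarrow>
      ((\<lambda>t. x t $ i) has_real_derivative (1 - x t $ i) * g i t) (at t within {0..})"
    and g: "\<And>i t. t \<ge> 0 \<Longrightarrow> 0 \<le> g i t" and init: "\<And>i. 0 < x 0 $ i"
  obtains lo hi where "0 < lo" "lo \<le> hi" "\<And>i t. t \<ge> 0 \<Longrightarrow> lo \<le> x t $ i \<and> x t $ i \<le> hi"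
proof -
  define lo where "lo = Min (insert 1 (range (\<lambda>i. x 0 $ i)))"
  define hi where "hi = Max (insert 1 (range (\<lambda>i. x 0 $ i)))"
  have lo_le: "lo \<le> x 0 $ i" "lo \<le> 1" for i unfolding lo_def by (rule Min_le; simp)+
  have hi_ge: "x 0 $ i \<le> hi" "1 \<le> hi" for i unfolding hi_def by (rule Max_ge; simp)+
  show thesis
  proof (rule that)
    show "0 < lo" using init by (simp add: lo_def)
    show "lo \<le> hi" using lo_le(2) hi_ge(2) by linarith
    fix i and t :: real assume "t \<ge> 0"
    then show "lo \<le> x t $ i \<and> x t $ i \<le> hi"
      using relaxation_between[OF x'[where i = i] g[where i = i] \<open>t \<ge> 0\<close>] lo_le hi_ge
      by (meson min.bounded_iff max.bounded_iff order_trans)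
  qed
qed

lemma has_real_derivative_vec_nth:
  "(x has_vector_derivative D) F \<Longrightarrow> ((\<lambda>t. x t $ i) has_real_derivative D $ i) F"
  using bounded_linear.has_vector_derivative[OF bounded_linear_vec_nth, of x D F i]
  by (simp add: has_real_derivative_iff_has_vector_derivative)

theorem lemma3:
  fixes M :: real
    and f :: "real^'k::finite^'n::finite \<Rightarrow> real"
    and m :: "real \<Rightarrow> real^'n"
  assumes dens: "smooth_density M f"
    and ode: "\<And>t. t \<ge> 0 \<Longrightarrow>
       (m has_vector_derivative (\<chi> i. fp_utility M f (m t) i)) (at t within {0..})"
    and init: "\<And>i. m 0 $ i > 0"
  shows "(m \<longlongrightarrow> (\<chi> i. 1)) at_top"
proof -
  have M: "0 < M" and fpos: "\<And>v. v \<in> val_box M \<Longrightarrow> 0 < f v"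
    using dens unfolding smooth_density_def by auto
  have fc: "continuous_on (val_box M) f" using dens by (rule smooth_density_continuous)
  define G where "G i t = expected_value_won M f (m t) i" for i t
  have m': "((\<lambda>t. m t $ i) has_real_derivative (1 - m t $ i) * G i t) (at t within {0..})"
    if "t \<ge> 0" for i t
    using has_real_derivative_vec_nth[OF ode[OF that]] by (simp add: G_def fp_utility_eq)
  have G_nonneg: "0 \<le> G i t" for i t
    unfolding G_def using fc fpos by (intro expected_value_won_nonneg) (auto simp: less_imp_le)
  obtain lo hi where lo_hi: "0 < lo" "lo \<le> hi"
    and region: "\<And>i t. t \<ge> 0 \<Longrightarrow> lo \<le> m t $ i \<and> m t $ i \<le> hi"
    using relaxation_system_in_box[OF m' G_nonneg init] by blast
  show ?thesis
  proof (rule vec_tendstoI)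
    fix i
    obtain c where "0 < c"
      and c: "\<And>m. \<forall>l. lo \<le> m$l \<and> m$l \<le> hi \<Longrightarrow> c \<le> expected_value_won M f m i"
      using expected_value_won_uniformly_pos[OF M fpos fc lo_hi] by blast
    have "((\<lambda>t. m t $ i) \<longlongrightarrow> 1) at_top"
      using relaxation_tendsto_one[OF m' _ \<open>0 < c\<close>] c region unfolding G_def by blast
    then show "((\<lambda>t. m t $ i) \<longlongrightarrow> (\<chi> i. 1) $ i) at_top" by simp
  qed
qed

end
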